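(* There is no equal norm tight integer frame with an odd number of elements in $\mathcal{H}_2$.
   Context: $\mathcal{H}_M$ is the real $M$-dimensional Hilbert space, identified with $\mathbb{R}^M$ via a fixed orthonormal basis. An equal norm tight integer frame (ENTIF) with $N$ elements in $\mathcal{H}_M$ is an $M\times N$ integer matrix $A$ of rank $M$ with $AA^T=\lambda I_M$ for some $\lambda>0$ and all columns of the same Euclidean norm. *)

theory Defs
  imports Complex_Main "Jordan_Normal_Form.DL_Rank"
begin

definition ENTIF :: "nat \<Rightarrow> nat \<Rightarrow> int mat \<Rightarrow> bool" where
  "ENTIF M N A \<longleftrightarrow>
     A \<in> carrier_mat M N \<and>
     vec_space.rank M (map_mat real_of_int A :: real mat) = M \<and>
     (\<exists>c::real. c > 0 \<and>
        map_mat real_of_int (A * transpose_mat A) = c \<cdot>\<^sub>m (1\<^sub>m M)) \<and>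
     (\<forall>j < N. \<forall>k < N. sqrt (\<Sum>i<M. real_of_int (A $$ (i, j))^2)
                          = sqrt (\<Sum>i<M. real_of_int (A $$ (i, k))^2))"

end

theory Submission
  imports Defs
begin

text \<open>Let the two rows of a putative frame be \<open>a\<close> and \<open>b\<close>, so that \<open>a\<^sub>j\<^sup>2 + b\<^sub>j\<^sup>2 = c\<close> for every
column \<open>j\<close>, \<open>\<Sum> a\<^sub>j b\<^sub>j = 0\<close> and \<open>\<Sum> a\<^sub>j\<^sup>2 = \<Sum> b\<^sub>j\<^sup>2\<close>. Summing the column norms gives
\<open>N c = 2 \<Sum> a\<^sub>j\<^sup>2\<close>, so \<open>c\<close> is even when \<open>N\<close> is odd. If \<open>c \<equiv> 2 (mod 4)\<close>, every \<open>a\<^sub>j\<close> and \<open>b\<^sub>j\<close>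
is odd and \<open>\<Sum> a\<^sub>j b\<^sub>j\<close> is a sum of an odd number of odd terms, which cannot vanish. Hence
\<open>c \<equiv> 0 (mod 4)\<close>, all entries are even, and halving them gives a smaller solution;
by infinite descent all entries vanish, contradicting \<open>c > 0\<close>.\<close>

lemma int_power2_mod_4: "(x::int)\<^sup>2 mod 4 = (if even x then 0 else 1)"
proof (cases "even x")
  case True
  then obtain k where "x = 2 * k" by blast
  then show ?thesis by (simp add: power2_eq_square)
next
  case False
  then obtain k where "x = 2 * k + 1" using oddE by blast
  then have "x\<^sup>2 = 4 * (k * k + k) + 1" by (simp add: power2_eq_square algebra_simps)
  then have "x\<^sup>2 mod 4 = (4 * (k * k + k) + 1) mod 4" by simp
  also have "\<dots> = 1" by presburger
  finally show ?thesis using False by simp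
qed

lemma sum_two_squares_mod_4:
  "((x::int)\<^sup>2 + y\<^sup>2) mod 4 = (if even x then 0 else 1) + (if even y then 0 else 1)"
proof -
  have "((x::int)\<^sup>2 + y\<^sup>2) mod 4 = (x\<^sup>2 mod 4 + y\<^sup>2 mod 4) mod 4"
    by (rule mod_add_eq[symmetric])
  then show ?thesis by (simp add: int_power2_mod_4)
qed

lemma odd_sum_odd_terms:
  fixes f :: "'a \<Rightarrow> int"
  assumes "finite A" "odd (card A)" "\<And>x. x \<in> A \<Longrightarrow> odd (f x)"
  shows "odd (sum f A)"
proof -
  have "{x \<in> A. odd (f x)} = A" using assms(3) by blast
  then show ?thesis using assms(1,2) by (simp add: even_sum_iff)
qed

definition tight_rows :: "nat \<Rightarrow> (nat \<Rightarrow> int) \<Rightarrow> (nat \<Rightarrow> int) \<Rightarrow> int \<Rightarrow> bool" where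
  "tight_rows N a b c \<longleftrightarrow>
     (\<forall>j<N. (a j)\<^sup>2 + (b j)\<^sup>2 = c) \<and>
     (\<Sum>j<N. a j * b j) = 0 \<and>
     (\<Sum>j<N. (a j)\<^sup>2) = (\<Sum>j<N. (b j)\<^sup>2)"

lemma tight_rows_even_norm:
  assumes "tight_rows N a b c" "odd N"
  shows "even c"
proof -
  have "int N * c = (\<Sum>j<N. (a j)\<^sup>2 + (b j)\<^sup>2)"
    using assms(1) by (simp add: tight_rows_def)
  also have "\<dots> = 2 * (\<Sum>j<N. (a j)\<^sup>2)"
    using assms(1) unfolding tight_rows_def sum.distrib by simp
  finally show ?thesis using assms(2) by (metis dvd_triv_left even_mult_iff even_of_nat)
qed

lemma tight_rows_entries_even:
  assumes tight: "tight_rows N a b c" and "odd N" and "j < N"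
  shows "even (a j) \<and> even (b j)"
proof -
  have norm: "\<And>k. k < N \<Longrightarrow> c mod 4 = (if even (a k) then 0 else 1) + (if even (b k) then 0 else 1)"
    using tight by (auto simp: tight_rows_def sum_two_squares_mod_4[symmetric])
  have "c mod 4 \<noteq> 2"
  proof
    assume "c mod 4 = 2"
    then have "\<And>k. k < N \<Longrightarrow> odd (a k * b k)"
      using norm by (fastforce split: if_splits)
    then have "odd (\<Sum>k<N. a k * b k)"
      using \<open>odd N\<close> by (intro odd_sum_odd_terms) auto
    then show False using tight by (simp add: tight_rows_def)
  qed
  moreover have "even (c mod 4)"
    using tight_rows_even_norm[OF tight \<open>odd N\<close>] by presburger
  ultimately have "c mod 4 = 0" using norm[OF \<open>j < N\<close>] by (auto split: if_splits)
  then show ?thesis using norm[OF \<open>j < N\<close>] by (auto split: if_splits)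
qed

lemma tight_rows_halve:
  assumes tight: "tight_rows N a b c" and even: "\<And>j. j < N \<Longrightarrow> even (a j) \<and> even (b j)"
  shows "tight_rows N (\<lambda>j. a j div 2) (\<lambda>j. b j div 2) (c div 4)"
proof -
  define a' b' where "a' j = a j div 2" and "b' j = b j div 2" for j
  have a: "a j = 2 * a' j" and b: "b j = 2 * b' j" if "j < N" for j
    using even[OF that] by (auto simp: a'_def b'_def)
  have "(a' j)\<^sup>2 + (b' j)\<^sup>2 = c div 4" if "j < N" for j
  proof -
    have "c = (a j)\<^sup>2 + (b j)\<^sup>2" using tight that by (simp add: tight_rows_def)
    also have "\<dots> = 4 * ((a' j)\<^sup>2 + (b' j)\<^sup>2)" using a[OF that] b[OF that] by simp
    finally show ?thesis by simp
  qed
  moreover have "(\<Sum>j<N. a j * b j) = 4 * (\<Sum>j<N. a' j * b' j)"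
    using a b by (simp add: sum_distrib_left)
  moreover have "(\<Sum>j<N. (a j)\<^sup>2) = 4 * (\<Sum>j<N. (a' j)\<^sup>2)"
    and "(\<Sum>j<N. (b j)\<^sup>2) = 4 * (\<Sum>j<N. (b' j)\<^sup>2)"
    using a b by (simp_all add: sum_distrib_left power_mult_distrib)
  ultimately show ?thesis
    using tight unfolding tight_rows_def a'_def[symmetric] b'_def[symmetric] by auto
qed

lemma tight_rows_odd_norm_zero:
  assumes "tight_rows N a b c" "odd N"
  shows "c = 0"
  using assms
proof (induction "nat c" arbitrary: a b c rule: less_induct)
  case less
  have N_pos: "0 < N" using \<open>odd N\<close> by (cases N) auto
  have c: "c = (a 0)\<^sup>2 + (b 0)\<^sup>2"
    using less.prems(1) N_pos by (simp add: tight_rows_def)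
  have even: "\<And>j. j < N \<Longrightarrow> even (a j) \<and> even (b j)"
    using tight_rows_entries_even less.prems by blast
  have "4 dvd c"
    using c even[OF N_pos] by (simp add: dvd_eq_mod_eq_0 sum_two_squares_mod_4)
  moreover have "c div 4 = 0" if "c \<noteq> 0"
  proof (rule less.hyps)
    have "0 \<le> c" by (simp add: c)
    then show "nat (c div 4) < nat c" using that by (simp add: nat_less_eq_zless)
    show "tight_rows N (\<lambda>j. a j div 2) (\<lambda>j. b j div 2) (c div 4)"
      using tight_rows_halve[OF less.prems(1) even] .
  qed (use less.prems in blast)
  ultimately show "c = 0" by fastforce
qed

lemma tight_rows_odd_zero:
  assumes "tight_rows N a b c" "odd N" "j < N"
  shows "a j = 0 \<and> b j = 0"
  using assms tight_rows_odd_norm_zero[OF assms(1,2)] by (simp add: tight_rows_def)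

lemma ENTIF_row_inner_products:
  assumes "ENTIF M N A"
  obtains c :: real where "c > 0"
    and "\<And>i k. i < M \<Longrightarrow> k < M \<Longrightarrow>
           real_of_int (\<Sum>j<N. A $$ (i, j) * A $$ (k, j)) = (if i = k then c else 0)"
proof -
  from assms obtain c :: real where "c > 0"
    and gram: "map_mat real_of_int (A * transpose_mat A) = c \<cdot>\<^sub>m 1\<^sub>m M"
    and A: "A \<in> carrier_mat M N"
    unfolding ENTIF_def by blast
  have "real_of_int (\<Sum>j<N. A $$ (i, j) * A $$ (k, j)) = (if i = k then c else 0)"
    if "i < M" "k < M" for i k
  proof -
    have "(A * transpose_mat A) $$ (i, k) = (\<Sum>j<N. A $$ (i, j) * A $$ (k, j))"
      using A that by (auto simp: scalar_prod_def lessThan_atLeast0)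
    then show ?thesis
      using arg_cong[OF gram, of "\<lambda>B. B $$ (i, k)"] A that by simp
  qed
  with \<open>c > 0\<close> show ?thesis using that by blast
qed

lemma ENTIF_column_norms_eq:
  assumes "ENTIF M N A" "j < N" "k < N"
  shows "(\<Sum>i<M. (A $$ (i, j))\<^sup>2) = (\<Sum>i<M. (A $$ (i, k))\<^sup>2)"
proof -
  have "sqrt (\<Sum>i<M. real_of_int (A $$ (i, j))^2) = sqrt (\<Sum>i<M. real_of_int (A $$ (i, k))^2)"
    using assms unfolding ENTIF_def by blast
  then have "real_of_int (\<Sum>i<M. (A $$ (i, j))\<^sup>2) = real_of_int (\<Sum>i<M. (A $$ (i, k))\<^sup>2)"
    by simp
  then show ?thesis by (simp only: of_int_eq_iff)
qed

lemma ENTIF_2_tight_rows: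
  assumes "ENTIF 2 N A" "0 < N"
  shows "tight_rows N (\<lambda>j. A $$ (0, j)) (\<lambda>j. A $$ (1, j)) ((A $$ (0, 0))\<^sup>2 + (A $$ (1, 0))\<^sup>2)"
proof -
  obtain c where inner: "\<And>i k. i < 2 \<Longrightarrow> k < 2 \<Longrightarrow>
      real_of_int (\<Sum>j<N. A $$ (i, j) * A $$ (k, j)) = (if i = k then c else 0)"
    using ENTIF_row_inner_products[OF assms(1)] by blast
  have columns: "(A $$ (0, j))\<^sup>2 + (A $$ (1, j))\<^sup>2 = (A $$ (0, 0))\<^sup>2 + (A $$ (1, 0))\<^sup>2"
    if "j < N" for j
  proof -
    have "{..<2::nat} = {0, 1}" by auto
    then show ?thesis using ENTIF_column_norms_eq[OF assms(1) that assms(2)] by simp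
  qed
  have "real_of_int (\<Sum>j<N. A $$ (0, j) * A $$ (1, j)) = 0"
    using inner[of 0 1] by simp
  then have orthogonal: "(\<Sum>j<N. A $$ (0, j) * A $$ (1, j)) = 0"
    by (simp only: of_int_eq_0_iff)
  have "real_of_int (\<Sum>j<N. A $$ (0, j) * A $$ (0, j))
      = real_of_int (\<Sum>j<N. A $$ (1, j) * A $$ (1, j))"
    using inner[of 0 0] inner[of 1 1] by simp
  then have norms: "(\<Sum>j<N. (A $$ (0, j))\<^sup>2) = (\<Sum>j<N. (A $$ (1, j))\<^sup>2)"
    by (simp only: of_int_eq_iff power2_eq_square)
  show ?thesis unfolding tight_rows_def using columns orthogonal norms by blast
qed

theorem theorem4p8:
  fixes N :: nat and A :: "int mat"
  assumes "odd N"
  shows "\<not> ENTIF 2 N A"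
proof
  assume frame: "ENTIF 2 N A"
  have "0 < N" using \<open>odd N\<close> by (cases N) auto
  obtain c where "c > 0" and inner: "\<And>i k. i < 2 \<Longrightarrow> k < 2 \<Longrightarrow>
      real_of_int (\<Sum>j<N. A $$ (i, j) * A $$ (k, j)) = (if i = k then c else 0)"
    using ENTIF_row_inner_products[OF frame] by blast
  have "\<forall>j<N. A $$ (0, j) = 0"
    using tight_rows_odd_zero[OF ENTIF_2_tight_rows[OF frame \<open>0 < N\<close>] \<open>odd N\<close>] by blast
  then have "c = 0" using inner[of 0 0] by simp
  with \<open>c > 0\<close> show False by simp
qed

end
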